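(* Let $n\ge1$. Then $$\min_{1\le i\le n} s\big([(10)^i0(10)^{n-i}]_2\big)=F_{2n+1}+F_{2n-1}.$$
   Context: Stern's sequence $(a(n))_{n\ge0}$: $a(0)=0$, $a(1)=1$, $a(2n)=a(n)$, $a(2n+1)=a(n)+a(n+1)$; $s(n)=a(n+1)$. For a binary string $x$, $[x]_2$ is the integer it represents in base 2; $x^i$ denotes $i$-fold concatenation ($x^0$ empty). $F_n$ are the Fibonacci numbers ($F_0=0,F_1=1,F_n=F_{n-1}+F_{n-2}$). *)

theory Defs
  imports Main "HOL-Number_Theory.Fib"
begin

function stern :: "nat \<Rightarrow> nat" where
  "stern n = (if n = 0 then 0 else if n = 1 then 1
              else if even n then stern (n div 2)
              else stern (n div 2) + stern (n div 2 + 1))"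
  by pat_completeness auto
termination by (relation "measure id") (auto elim!: oddE)

definition stern_s :: "nat \<Rightarrow> nat" where
  "stern_s n = stern (n + 1)"

text \<open>Binary strings as lists of bits, most significant bit first;
  bin_val x is the integer [x]_2.\<close>
fun bin_val_acc :: "nat \<Rightarrow> bool list \<Rightarrow> nat" where
  "bin_val_acc acc [] = acc"
| "bin_val_acc acc (b # bs) = bin_val_acc (2 * acc + (if b then 1 else 0)) bs"

definition bin_val :: "bool list \<Rightarrow> nat" where
  "bin_val x = bin_val_acc 0 x"

definition word_pow :: "bool list \<Rightarrow> nat \<Rightarrow> bool list" where
  "word_pow x i = concat (replicate i x)"

end

theory Submission
  imports Defs
begin

text \<open>Reading a binary word from the most significant bit, the pair
  (a(m), a(m+1)) is updated by (x, y) \<mapsto> (x + y, y) for a 1 and by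
  (x, y) \<mapsto> (x, x + y) for a 0.  Hence a block (10) acts by
  (x, y) \<mapsto> (x + y, x + 2y), whose powers are governed by Fibonacci numbers
  of even and odd index.  Evaluating, the word (10)^(j+1) 0 (10)^k yields
  s = F(2j+2) F(2k) + F(2j+4) F(2k+1), and the addition formula for F shows
  that this exceeds F(2n+1) + F(2n-1), n = j+k+1, by F(2j) (F(2k+1) - F(2k)),
  which vanishes for j = 0.\<close>

declare stern.simps [simp del]

lemma stern_0 [simp]: "stern 0 = 0"
  by (simp add: stern.simps)

lemma stern_Suc_0 [simp]: "stern (Suc 0) = 1"
  by (simp add: stern.simps)

lemma stern_double: "stern (2 * n) = stern n"
  by (cases "n = 0") (simp_all add: stern.simps [of "2 * n"])

lemma stern_double_Suc: "stern (Suc (2 * n)) = stern n + stern (Suc n)"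
  using stern.simps [of "Suc (2 * n)"] by (cases "n = 0") simp_all

definition stern_step :: "bool \<Rightarrow> nat \<times> nat \<Rightarrow> nat \<times> nat" where
  "stern_step b = (\<lambda>(x, y). if b then (x + y, y) else (x, x + y))"

lemma stern_step_True [simp]: "stern_step True (x, y) = (x + y, y)"
  and stern_step_False [simp]: "stern_step False (x, y) = (x, x + y)"
  by (simp_all add: stern_step_def)

lemma stern_pair_bin_val_acc:
  "(stern (bin_val_acc m bs), stern (Suc (bin_val_acc m bs)))
     = fold stern_step bs (stern m, stern (Suc m))"
proof (induction bs arbitrary: m)
  case Nil
  show ?case by simp
next
  case (Cons b bs)
  have "bin_val_acc m (b # bs) = bin_val_acc (2 * m + of_bool b) bs"
    by simp
  moreover have "stern_step b (stern m, stern (Suc m))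
      = (stern (2 * m + of_bool b), stern (Suc (2 * m + of_bool b)))"
    using stern_double [of m] stern_double [of "Suc m"] stern_double_Suc [of m]
    by (cases b) simp_all
  ultimately show ?case
    using Cons.IH [of "2 * m + of_bool b"] by (simp only: fold_simps)
qed

lemma stern_pair_bin_val:
  "(stern (bin_val bs), stern_s (bin_val bs)) = fold stern_step bs (0, 1)"
  using stern_pair_bin_val_acc [of 0 bs] by (simp add: bin_val_def stern_s_def)

lemma word_pow_Suc: "word_pow xs (Suc m) = xs @ word_pow xs m"
  by (simp add: word_pow_def)

lemma word_pow_Suc_right: "word_pow xs (Suc m) = word_pow xs m @ xs"
  by (simp add: word_pow_def replicate_append_same [symmetric])

lemma fib_even_Suc: "fib (2 * Suc m) = fib (2 * m) + fib (2 * m + 1)"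
  and fib_odd_Suc: "fib (2 * Suc m + 1) = fib (2 * m) + 2 * fib (2 * m + 1)"
  by (simp_all add: numeral_eq_Suc)

lemma fold_stern_step_word_pow_10_Suc:
  "fold stern_step (word_pow [True, False] (Suc m)) (x, y)
     = fold stern_step (word_pow [True, False] m) (x + y, x + 2 * y)"
  by (simp add: word_pow_Suc mult_2 add.assoc)

lemma fold_stern_step_word_pow_10_from_0_1:
  "fold stern_step (word_pow [True, False] m) (0, 1) = (fib (2 * m), fib (2 * m + 1))"
proof (induction m)
  case 0
  show ?case by (simp add: word_pow_def)
next
  case (Suc m)
  from Suc.IH show ?case
    by (simp add: word_pow_Suc_right fib_even_Suc fib_odd_Suc)
qed

lemma snd_fold_stern_step_word_pow_10:
  "snd (fold stern_step (word_pow [True, False] m) (x, y)) = x * fib (2 * m) + y * fib (2 * m + 1)"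
proof (induction m arbitrary: x y)
  case 0
  show ?case by (simp add: word_pow_def)
next
  case (Suc m)
  show ?case
    unfolding fold_stern_step_word_pow_10_Suc Suc.IH fib_even_Suc fib_odd_Suc
    by (simp add: algebra_simps)
qed

lemma stern_s_bin_val_block_word:
  "stern_s (bin_val (word_pow [True, False] i @ [False] @ word_pow [True, False] k))
     = fib (2 * i) * fib (2 * k) + fib (2 * i + 2) * fib (2 * k + 1)"
proof -
  let ?w = "word_pow [True, False] i @ [False] @ word_pow [True, False] k"
  have "fold stern_step (word_pow [True, False] i @ [False]) (0, 1) = (fib (2 * i), fib (2 * i + 2))"
    using fold_stern_step_word_pow_10_from_0_1 [of i] by (simp add: numeral_eq_Suc)
  then have "fold stern_step ?w (0, 1)
      = fold stern_step (word_pow [True, False] k) (fib (2 * i), fib (2 * i + 2))"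
    by simp
  then show ?thesis
    using stern_pair_bin_val [of ?w] snd_fold_stern_step_word_pow_10 by (metis snd_conv)
qed

lemma fib_block_identity:
  "fib (2 * j + 2) * fib (2 * k) + fib (2 * j + 4) * fib (2 * k + 1) + fib (2 * j) * fib (2 * k)
     = fib (2 * (j + k) + 3) + fib (2 * (j + k) + 1) + fib (2 * j) * fib (2 * k + 1)"
proof -
  define A B C D where "A = fib (2 * j)" and "B = fib (2 * j + 1)"
    and "C = fib (2 * k)" and "D = fib (2 * k + 1)"
  have j2: "fib (2 * j + 2) = A + B" and j4: "fib (2 * j + 4) = 2 * A + 3 * B"
    by (simp_all add: A_def B_def numeral_eq_Suc)
  have n1: "fib (2 * (j + k) + 1) = D * B + C * A"
    using fib_add [of "2 * j" "2 * k"] by (simp add: A_def B_def C_def D_def algebra_simps)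
  have n2: "fib (2 * (j + k) + 2) = D * (A + B) + C * B"
    using fib_add [of "2 * j + 1" "2 * k"]
    by (simp add: A_def B_def C_def D_def numeral_eq_Suc algebra_simps)
  have n3: "fib (2 * (j + k) + 3) = fib (2 * (j + k) + 2) + fib (2 * (j + k) + 1)"
    by (simp add: numeral_eq_Suc)
  show ?thesis
    unfolding n3 n2 n1 j2 j4 A_def [symmetric] C_def [symmetric] D_def [symmetric]
    by (simp add: algebra_simps)
qed

lemma stern_s_bin_val_block_word_ge:
  "fib (2 * (j + k) + 3) + fib (2 * (j + k) + 1)
     \<le> stern_s (bin_val (word_pow [True, False] (Suc j) @ [False] @ word_pow [True, False] k))"
  (is "?F \<le> ?s")
proof -
  have index: "2 * Suc j + 2 = 2 * j + 4" "2 * Suc j = 2 * j + 2" by simp_all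
  have "?F + fib (2 * j) * fib (2 * k + 1) = ?s + fib (2 * j) * fib (2 * k)"
    unfolding stern_s_bin_val_block_word index(1) unfolding index(2)
    by (rule fib_block_identity [symmetric])
  also have "\<dots> \<le> ?s + fib (2 * j) * fib (2 * k + 1)"
    by (simp add: fib_Suc_mono)
  finally show ?thesis by simp
qed

lemma stern_s_bin_val_block_word_first:
  "stern_s (bin_val (word_pow [True, False] 1 @ [False] @ word_pow [True, False] k))
     = fib (2 * k + 3) + fib (2 * k + 1)"
  using fib_block_identity [of 0 k] unfolding stern_s_bin_val_block_word by simp

theorem mainTheorem11:
  fixes n :: nat
  assumes "n \<ge> 1"
  shows "Min ((\<lambda>i. stern_s (bin_val (word_pow [True, False] i @ [False] @ word_pow [True, False] (n - i)))) ` {1..n})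
         = fib (2 * n + 1) + fib (2 * n - 1)"
proof (rule Min_eqI)
  let ?s = "\<lambda>i. stern_s (bin_val (word_pow [True, False] i @ [False] @ word_pow [True, False] (n - i)))"
  show "finite (?s ` {1..n})" by simp
  show "fib (2 * n + 1) + fib (2 * n - 1) \<le> v" if "v \<in> ?s ` {1..n}" for v
  proof -
    from that obtain i where i: "i \<in> {1..n}" "v = ?s i" by blast
    then obtain j where j: "Suc j \<in> {1..n}" "v = ?s (Suc j)"
      by (cases i) auto
    then have "2 * n + 1 = 2 * (j + (n - Suc j)) + 3" "2 * n - 1 = 2 * (j + (n - Suc j)) + 1"
      by auto
    then show ?thesis
      using j(2) stern_s_bin_val_block_word_ge [of j "n - Suc j"] by (simp only:)
  qed
  have "2 * n + 1 = 2 * (n - 1) + 3" "2 * n - 1 = 2 * (n - 1) + 1"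
    using assms by auto
  then have "fib (2 * n + 1) + fib (2 * n - 1) = ?s 1"
    using stern_s_bin_val_block_word_first [of "n - 1"] by (simp only:)
  moreover have "1 \<in> {1..n}"
    using assms by simp
  ultimately show "fib (2 * n + 1) + fib (2 * n - 1) \<in> ?s ` {1..n}"
    by (rule image_eqI)
qed

end
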